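(* Let $\mathbb{X}$ be a two-dimensional real Banach space, let $z\in\mathbb{X}$ with $z\neq 0$, and let $\epsilon\in[0,1)$. Then $\overline{B}(z,\epsilon)\cap S_{\mathbb{X}}$ is either empty or path connected.
   Context: $\overline{B}(z,\epsilon)=\{w\in\mathbb{X}:\|w-z\|\leq\epsilon\}$ and $S_{\mathbb{X}}$ is the unit sphere of $\mathbb{X}$. *)

theory Defs
  imports "HOL-Analysis.Analysis"
begin

end

theory Submission
  imports Defs
begin

text \<open>
  Write \<open>z = (1 - \<epsilon>) c\<close>. Then \<open>cball z \<epsilon>\<close> is the image of the closed unit ball \<open>B\<close> under the
  homothety with centre \<open>c\<close> and ratio \<open>\<epsilon>\<close>, so for every point \<open>x\<close> of the cap
  \<open>T = cball z \<epsilon> \<inter> sphere 0 1\<close> the point \<open>c + (x - c) /\<^sub>R \<epsilon>\<close> is again in \<open>B\<close>. Convexity of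
  the norm along the line through \<open>c\<close> and \<open>x\<close> then shows that the norm is at least 1 on the
  part of the line between \<open>x\<close> and \<open>c\<close>; hence segments from \<open>x\<close> towards \<open>c\<close> stay in \<open>T\<close> as
  long as their endpoint does.

  If \<open>norm c \<le> 1\<close>, then \<open>c \<in> T\<close> and \<open>T\<close> is star-shaped about \<open>c\<close>. If \<open>norm c > 1\<close>, two points
  \<open>u, v \<in> T\<close> are joined by sending each point \<open>m\<close> of the chord \<open>[u, v] \<subseteq> B\<close> to the first point of
  \<open>B\<close> on the segment from \<open>c\<close> to \<open>m\<close>. That point is \<open>c + (m - c) /\<^sub>R g\<close>, where \<open>g\<close> is concave
  (so lower semicontinuous) along the chord and upper semicontinuous by a compactness
  argument; thus it moves continuously, and it stays in \<open>T\<close>.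
\<close>

section \<open>Concave functions on a compact interval\<close>

lemma concave_on_Icc_lower_semicontinuous:
  fixes f :: "real \<Rightarrow> real"
  assumes f: "concave_on {a..b} f" and s0: "s0 \<in> {a..b}" and y: "y < f s0"
  shows "\<forall>\<^sub>F s in at s0 within {a..b}. y < f s"
proof -
  define L where "L s = min ((f b - f s0) / (b - s0) * (s - s0) + f s0)
                           ((f a - f s0) / (s0 - a) * (s0 - s) + f s0)" for s
  have L_le: "L s \<le> f s" if s: "s \<in> {a..b}" for s
  proof (cases "s0 \<le> s")
    case True
    have "concave_on {s0..b} f"
      using f s0 by (auto simp: concave_on_def intro: convex_on_subset)
    then have "(f b - f s0) / (b - s0) * (s - s0) + f s0 \<le> f s"
      using concave_onD_Icc' True s by auto
    then show ?thesis
      unfolding L_def by linarith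
  next
    case False
    have "concave_on {a..s0} f"
      using f s0 by (auto simp: concave_on_def intro: convex_on_subset)
    then have "(f a - f s0) / (s0 - a) * (s0 - s) + f s0 \<le> f s"
      using concave_onD_Icc'' False s by auto
    then show ?thesis
      unfolding L_def by linarith
  qed
  have "(L \<longlongrightarrow> L s0) (at s0 within {a..b})"
    unfolding L_def by (intro tendsto_intros)
  moreover have "L s0 = f s0"
    unfolding L_def by simp
  ultimately have "\<forall>\<^sub>F s in at s0 within {a..b}. y < L s"
    using y by (auto intro: order_tendstoD)
  moreover have "\<forall>\<^sub>F s in at s0 within {a..b}. s \<in> {a..b}"
    by (simp add: eventually_at_filter)
  ultimately show ?thesis
    by eventually_elim (use L_le in fastforce)
qed

lemma continuous_on_Icc_if_concave_closed_superlevel: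
  fixes f :: "real \<Rightarrow> real"
  assumes f: "concave_on {a..b} f" and closed: "\<And>y. closed {s \<in> {a..b}. y \<le> f s}"
  shows "continuous_on {a..b} f"
  unfolding continuous_on_eq_continuous_within continuous_within
proof (intro ballI order_tendstoI)
  fix s0 y
  assume "s0 \<in> {a..b}" "y < f s0"
  then show "\<forall>\<^sub>F s in at s0 within {a..b}. y < f s"
    by (rule concave_on_Icc_lower_semicontinuous[OF f])
next
  fix s0 y
  assume "f s0 < y"
  then have "\<forall>\<^sub>F s in nhds s0. s \<in> - {s \<in> {a..b}. y \<le> f s}"
    using closed by (intro eventually_nhds_in_open) (auto simp: open_Compl)
  then show "\<forall>\<^sub>F s in at s0 within {a..b}. f s < y"
    unfolding eventually_at_filter by (rule eventually_mono) auto
qed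

section \<open>Caps of the unit sphere\<close>

lemma norm_scaleR_add_convex_combination:
  fixes c d1 d2 :: "'a::real_normed_vector"
  assumes "norm (w1 *\<^sub>R c + d1) \<le> w1" "norm (w2 *\<^sub>R c + d2) \<le> w2" "0 \<le> l" "l \<le> 1"
  shows "norm (((1 - l) * w1 + l * w2) *\<^sub>R c + ((1 - l) *\<^sub>R d1 + l *\<^sub>R d2))
           \<le> (1 - l) * w1 + l * w2"
proof -
  have "((1 - l) * w1 + l * w2) *\<^sub>R c + ((1 - l) *\<^sub>R d1 + l *\<^sub>R d2)
      = (1 - l) *\<^sub>R (w1 *\<^sub>R c + d1) + l *\<^sub>R (w2 *\<^sub>R c + d2)"
    by (simp add: algebra_simps)
  also have "norm \<dots> \<le> (1 - l) * norm (w1 *\<^sub>R c + d1) + l * norm (w2 *\<^sub>R c + d2)"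
    using norm_triangle_ineq[of "(1 - l) *\<^sub>R (w1 *\<^sub>R c + d1)" "l *\<^sub>R (w2 *\<^sub>R c + d2)"] assms(3,4)
    by simp
  also have "\<dots> \<le> (1 - l) * w1 + l * w2"
    using assms by (intro add_mono mult_left_mono) auto
  finally show ?thesis .
qed

lemma norm_line_ge_one_behind:
  fixes c d :: "'a::real_normed_vector"
  assumes "norm (c + d) = 1" "norm (c + b *\<^sub>R d) \<le> 1" "a \<le> 1" "1 < b"
  shows "1 \<le> norm (c + a *\<^sub>R d)"
proof -
  define t where "t = (1 - a) / (b - a)"
  have ba: "0 < b - a"
    using assms(3,4) by simp
  have t: "0 \<le> t" "t < 1"
    using ba assms(3,4) by (simp_all add: t_def)
  have "t * (b - a) = 1 - a"
    using ba by (simp add: t_def)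
  then have t_comb: "(1 - t) * a + t * b = 1"
    by (simp add: algebra_simps)
  have "(1 - t) *\<^sub>R (c + a *\<^sub>R d) + t *\<^sub>R (c + b *\<^sub>R d) = c + ((1 - t) * a + t * b) *\<^sub>R d"
    by (simp add: algebra_simps)
  then have "c + d = (1 - t) *\<^sub>R (c + a *\<^sub>R d) + t *\<^sub>R (c + b *\<^sub>R d)"
    using t_comb by simp
  then have "1 \<le> (1 - t) * norm (c + a *\<^sub>R d) + t * norm (c + b *\<^sub>R d)"
    using assms(1) norm_triangle_ineq[of "(1 - t) *\<^sub>R (c + a *\<^sub>R d)" "t *\<^sub>R (c + b *\<^sub>R d)"] t(1,2)
    by simp
  also have "\<dots> \<le> (1 - t) * norm (c + a *\<^sub>R d) + t"
    using assms(2) t(1) by (simp add: mult_left_le)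
  finally have "(1 - t) * 1 \<le> (1 - t) * norm (c + a *\<^sub>R d)"
    by (simp add: algebra_simps)
  then show ?thesis
    using t(2) by simp
qed

lemma mem_cball_homothetic_iff:
  fixes c x :: "'a::real_normed_vector"
  assumes "0 < e"
  shows "x \<in> cball ((1 - e) *\<^sub>R c) e \<longleftrightarrow> norm (c + (1 / e) *\<^sub>R (x - c)) \<le> 1"
proof -
  have "c + (1 / e) *\<^sub>R (x - c) = (1 / e) *\<^sub>R (x - (1 - e) *\<^sub>R c)"
    using assms by (simp add: algebra_simps)
  then have "norm (c + (1 / e) *\<^sub>R (x - c)) = dist ((1 - e) *\<^sub>R c) x / e"
    using assms by (simp add: dist_norm norm_minus_commute)
  then show ?thesis
    using assms by (simp add: divide_le_eq_1)
qed

lemma closed_segment_towards_centre_subset: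
  fixes c x :: "'a::real_normed_vector" and e a :: real
  defines "T \<equiv> cball ((1 - e) *\<^sub>R c) e \<inter> sphere 0 1"
  assumes "0 < e" "e < 1" "x \<in> T" "c + a *\<^sub>R (x - c) \<in> T" "a \<le> 1"
  shows "closed_segment x (c + a *\<^sub>R (x - c)) \<subseteq> T"
proof
  fix q assume q: "q \<in> closed_segment x (c + a *\<^sub>R (x - c))"
  have "closed_segment x (c + a *\<^sub>R (x - c)) \<subseteq> cball ((1 - e) *\<^sub>R c) e \<inter> cball 0 1"
    using assms(4,5) unfolding T_def
    by (intro closed_segment_subset convex_Int convex_cball) auto
  then have q_in: "q \<in> cball ((1 - e) *\<^sub>R c) e" "norm q \<le> 1"
    using q by auto
  obtain t where t: "0 \<le> t" "t \<le> 1" "q = (1 - t) *\<^sub>R x + t *\<^sub>R (c + a *\<^sub>R (x - c))"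
    using q unfolding closed_segment_def by auto
  then have "q = c + ((1 - t) + t * a) *\<^sub>R (x - c)"
    by (simp add: algebra_simps)
  moreover have "(1 - t) + t * a \<le> 1"
    using t assms(6) by (simp add: mult_left_le)
  moreover have "norm (c + (1 / e) *\<^sub>R (x - c)) \<le> 1"
    using assms(2,4) mem_cball_homothetic_iff unfolding T_def by blast
  ultimately have "1 \<le> norm q"
    using norm_line_ge_one_behind[of c "x - c" "1 / e"] assms(2-4) unfolding T_def by auto
  then show "q \<in> T"
    using q_in unfolding T_def by simp
qed

lemma path_connected_cap_if_centre_in_ball:
  fixes c :: "'a::real_normed_vector"
  assumes "0 < e" "e < 1" "norm c \<le> 1"
  shows "path_connected (cball ((1 - e) *\<^sub>R c) e \<inter> sphere 0 1)" (is "path_connected ?T")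
proof (cases "?T = {}")
  case False
  then obtain x where x: "x \<in> ?T"
    by blast
  have "dist ((1 - e) *\<^sub>R c) c = e * norm c"
    using assms(1) by (simp add: dist_norm algebra_simps)
  then have c_in_cball: "c \<in> cball ((1 - e) *\<^sub>R c) e"
    using assms by (simp add: mult_left_le)
  have "norm (c + (1 / e) *\<^sub>R (x - c)) \<le> 1"
    using x assms(1) mem_cball_homothetic_iff by blast
  then have "1 \<le> norm (c + 0 *\<^sub>R (x - c))"
    using norm_line_ge_one_behind[of c "x - c" "1 / e" 0] x assms(1,2) by simp
  then have c_in: "c \<in> ?T"
    using c_in_cball assms(3) by simp
  have "closed_segment c y \<subseteq> ?T" if "y \<in> ?T" for y
    using closed_segment_towards_centre_subset[OF assms(1,2) that, where a = 0] c_in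
    by (simp add: closed_segment_commute)
  then have "starlike ?T"
    unfolding starlike_def using c_in by blast
  then show ?thesis
    by (rule starlike_imp_path_connected)
qed simp

section \<open>Entering the unit ball from outside\<close>

text \<open>
  The condition on \<open>w\<close> says \<open>c + d /\<^sub>R w \<in> cball 0 1\<close>. So for \<open>norm c > 1\<close> and
  \<open>norm (c + d) \<le> 1\<close>, \<open>c + d /\<^sub>R entry_scale c d\<close> is the first point of the closed unit ball on
  the segment from \<open>c\<close> to \<open>c + d\<close>.
\<close>
definition entry_scale :: "'a::real_normed_vector \<Rightarrow> 'a \<Rightarrow> real"
  where "entry_scale c d = Sup {w. 1 \<le> w \<and> norm (w *\<^sub>R c + d) \<le> w}"

lemma entry_scale_candidate_bound:
  fixes c d :: "'a::real_normed_vector"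
  assumes "1 < norm c" "norm (w *\<^sub>R c + d) \<le> w"
  shows "w \<le> norm d / (norm c - 1)"
proof -
  have "0 \<le> w"
    using assms(2) by (rule order_trans[OF norm_ge_zero])
  then have "w * norm c \<le> norm (w *\<^sub>R c + d) + norm d"
    using norm_triangle_ineq4[of "w *\<^sub>R c + d" d] by simp
  then have "w * (norm c - 1) \<le> norm d"
    using assms(2) by (simp add: algebra_simps)
  then show ?thesis
    using assms(1) by (simp add: pos_le_divide_eq)
qed

lemma entry_scale_ge:
  fixes c d :: "'a::real_normed_vector"
  assumes "1 < norm c" "1 \<le> w" "norm (w *\<^sub>R c + d) \<le> w"
  shows "w \<le> entry_scale c d"
  unfolding entry_scale_def
proof (rule cSup_upper)
  show "bdd_above {w. 1 \<le> w \<and> norm (w *\<^sub>R c + d) \<le> w}"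
    using entry_scale_candidate_bound[OF assms(1)] by (intro bdd_aboveI) blast
qed (use assms in simp)

lemma entry_scale_mem:
  fixes c d :: "'a::real_normed_vector"
  assumes "1 < norm c" "norm (c + d) \<le> 1"
  shows "1 \<le> entry_scale c d" "norm (entry_scale c d *\<^sub>R c + d) \<le> entry_scale c d"
proof -
  let ?F = "{w. 1 \<le> w \<and> norm (w *\<^sub>R c + d) \<le> w}"
  have "1 \<in> ?F"
    using assms(2) by simp
  moreover have "bdd_above ?F"
    using entry_scale_candidate_bound[OF assms(1)] by (intro bdd_aboveI) blast
  moreover have "closed ?F"
    by (intro closed_Collect_conj closed_Collect_le continuous_intros)
  ultimately have "Sup ?F \<in> ?F"
    by (intro closed_contains_Sup) auto
  then show "1 \<le> entry_scale c d" "norm (entry_scale c d *\<^sub>R c + d) \<le> entry_scale c d"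
    unfolding entry_scale_def by auto
qed

lemma entry_scale_le:
  fixes c d :: "'a::real_normed_vector"
  assumes "1 < norm c" "norm (c + d) \<le> 1"
  shows "entry_scale c d \<le> norm d / (norm c - 1)"
  using entry_scale_candidate_bound[OF assms(1) entry_scale_mem(2)[OF assms]] .

lemma norm_entry_scale:
  fixes c d :: "'a::real_normed_vector"
  assumes c: "1 < norm c" and d: "norm (c + d) \<le> 1"
  shows "norm (entry_scale c d *\<^sub>R c + d) = entry_scale c d"
proof (rule ccontr)
  let ?g = "entry_scale c d"
  assume "norm (?g *\<^sub>R c + d) \<noteq> ?g"
  then have lt: "norm (?g *\<^sub>R c + d) < ?g"
    using entry_scale_mem[OF c d] by simp
  define \<eta> where "\<eta> = (?g - norm (?g *\<^sub>R c + d)) / norm c"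
  have "0 < norm c"
    using c by linarith
  then have \<eta>: "0 < \<eta>" "\<eta> * norm c = ?g - norm (?g *\<^sub>R c + d)"
    using lt by (simp_all add: \<eta>_def)
  have "norm ((?g + \<eta>) *\<^sub>R c + d) \<le> norm (?g *\<^sub>R c + d) + norm (\<eta> *\<^sub>R c)"
    using norm_triangle_ineq[of "?g *\<^sub>R c + d" "\<eta> *\<^sub>R c"] by (simp add: algebra_simps)
  also have "\<dots> \<le> ?g + \<eta>"
    using \<eta> by simp
  finally have "?g + \<eta> \<le> ?g"
    using entry_scale_ge[OF c, of "?g + \<eta>" d] entry_scale_mem(1)[OF c d] \<eta>(1) by simp
  then show False
    using \<eta>(1) by simp
qed

lemma concave_on_entry_scale:
  fixes c :: "'a::real_normed_vector"
  assumes c: "1 < norm c"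
  shows "concave_on (cball (- c) 1) (entry_scale c)"
  unfolding concave_on_iff
proof (intro conjI convex_cball ballI allI impI)
  fix d1 d2 and u v :: real
  assume d: "d1 \<in> cball (- c) 1" "d2 \<in> cball (- c) 1" and uv: "0 \<le> u" "0 \<le> v" "u + v = 1"
  have d': "norm (c + d1) \<le> 1" "norm (c + d2) \<le> 1"
    using d by (simp_all add: dist_norm norm_minus_commute add.commute)
  let ?w = "u * entry_scale c d1 + v * entry_scale c d2"
  have u: "1 - v = u"
    using uv(3) by simp
  have "norm (?w *\<^sub>R c + (u *\<^sub>R d1 + v *\<^sub>R d2)) \<le> ?w"
    using norm_scaleR_add_convex_combination[OF entry_scale_mem(2)[OF c d'(1)]
        entry_scale_mem(2)[OF c d'(2)], of v] uv
    unfolding u by simp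
  moreover have "u * 1 + v * 1 \<le> ?w"
    using entry_scale_mem(1)[OF c d'(1)] entry_scale_mem(1)[OF c d'(2)] uv
    by (intro add_mono mult_left_mono) auto
  ultimately show "?w \<le> entry_scale c (u *\<^sub>R d1 + v *\<^sub>R d2)"
    using uv(3) by (intro entry_scale_ge[OF c]) auto
qed


lemma norm_linepath_le_1:
  fixes p q :: "'a::real_normed_vector"
  assumes "norm p \<le> 1" "norm q \<le> 1" "s \<in> {0..1}"
  shows "norm (linepath p q s) \<le> 1"
proof -
  have "closed_segment p q \<subseteq> cball 0 1"
    using assms(1,2) by (intro closed_segment_subset convex_cball) auto
  then show ?thesis
    using linepath_in_path[OF assms(3), of p q] by auto
qed

lemma closed_superlevel_entry_scale_linepath:
  fixes c p q :: "'a::real_normed_vector"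
  assumes c: "1 < norm c" and pq: "norm p \<le> 1" "norm q \<le> 1"
  shows "closed {s \<in> {0..1}. y \<le> entry_scale c (linepath p q s - c)}"
proof (cases "y \<le> 1")
  case True
  have "y \<le> entry_scale c (linepath p q s - c)" if "s \<in> {0..1}" for s
    using True entry_scale_mem(1)[OF c] norm_linepath_le_1[OF pq that] by (simp add: order_trans)
  then have "{s \<in> {0..1}. y \<le> entry_scale c (linepath p q s - c)} = {0..1}"
    by blast
  then show ?thesis
    by simp
next
  case False
  text \<open>Above level 1 the superlevel set is the projection of a closed set along the compact
    interval \<open>{y..G}\<close>, where \<open>G\<close> bounds \<open>entry_scale\<close> on the chord.\<close>
  define G where "G = (1 + norm c) / (norm c - 1)"
  define R where "R = {x. norm (fst x *\<^sub>R c + (linepath p q (snd x) - c)) \<le> fst x}"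
  have "{s \<in> {0..1}. y \<le> entry_scale c (linepath p q s - c)}
      = {0..1} \<inter> {s. \<exists>w. w \<in> {y..G} \<and> (w, s) \<in> R}"
  proof (intro set_eqI iffI)
    fix s
    assume "s \<in> {s \<in> {0..1}. y \<le> entry_scale c (linepath p q s - c)}"
    then have s: "s \<in> {0..1}" and y_le: "y \<le> entry_scale c (linepath p q s - c)"
      by auto
    let ?d = "linepath p q s - c"
    have in_ball: "norm (c + ?d) \<le> 1"
      using norm_linepath_le_1[OF pq s] by simp
    have "norm ?d \<le> 1 + norm c"
      using norm_triangle_ineq4[of "linepath p q s" c] norm_linepath_le_1[OF pq s] by simp
    then have "norm ?d / (norm c - 1) \<le> G"
      unfolding G_def using c by (intro divide_right_mono) auto
    then have "entry_scale c ?d \<le> G"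
      using entry_scale_le[OF c in_ball] by linarith
    then show "s \<in> {0..1} \<inter> {s. \<exists>w. w \<in> {y..G} \<and> (w, s) \<in> R}"
      using s y_le entry_scale_mem(2)[OF c in_ball] unfolding R_def by auto
  next
    fix s
    assume "s \<in> {0..1} \<inter> {s. \<exists>w. w \<in> {y..G} \<and> (w, s) \<in> R}"
    then obtain w where w: "s \<in> {0..1}" "y \<le> w" "norm (w *\<^sub>R c + (linepath p q s - c)) \<le> w"
      unfolding R_def by auto
    then have "w \<le> entry_scale c (linepath p q s - c)"
      using False by (intro entry_scale_ge[OF c]) auto
    then show "s \<in> {s \<in> {0..1}. y \<le> entry_scale c (linepath p q s - c)}"
      using w by auto
  qed
  moreover have "closed R"
    unfolding R_def linepath_def by (intro closed_Collect_le continuous_intros)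
  then have "closed {s. \<exists>w. w \<in> {y..G} \<and> (w, s) \<in> R}"
    by (rule closed_compact_projection[OF compact_Icc])
  ultimately show ?thesis
    by (simp only:) (intro closed_Int closed_atLeastAtMost)
qed

lemma continuous_on_entry_scale_linepath:
  fixes c p q :: "'a::real_normed_vector"
  assumes c: "1 < norm c" and pq: "norm p \<le> 1" "norm q \<le> 1"
  shows "continuous_on {0..1} (\<lambda>s. entry_scale c (linepath p q s - c))"
proof (rule continuous_on_Icc_if_concave_closed_superlevel)
  show "closed {s \<in> {0..1}. y \<le> entry_scale c (linepath p q s - c)}" for y
    by (rule closed_superlevel_entry_scale_linepath[OF assms])
  have in_cball: "linepath p q s - c \<in> cball (- c) 1" if "s \<in> {0..1}" for s
    using norm_linepath_le_1[OF pq that] by (simp add: dist_norm)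
  show "concave_on {0..1} (\<lambda>s. entry_scale c (linepath p q s - c))"
    unfolding concave_on_iff
  proof (intro conjI convex_real_interval ballI allI impI)
    fix s1 s2 u v :: real
    assume s: "s1 \<in> {0..1}" "s2 \<in> {0..1}" and uv: "0 \<le> u" "0 \<le> v" "u + v = 1"
    have "linepath p q (u *\<^sub>R s1 + v *\<^sub>R s2) - c
        = u *\<^sub>R (linepath p q s1 - c) + v *\<^sub>R (linepath p q s2 - c)"
      using uv(3) unfolding linepath_def
      by (simp add: algebra_simps flip: scaleR_add_left)
    then show "u * entry_scale c (linepath p q s1 - c) + v * entry_scale c (linepath p q s2 - c)
        \<le> entry_scale c (linepath p q (u *\<^sub>R s1 + v *\<^sub>R s2) - c)"
      using concave_on_entry_scale[OF c] in_cball[OF s(1)] in_cball[OF s(2)] uv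
      unfolding concave_on_iff by auto
  qed
qed

definition entry_point :: "'a::real_normed_vector \<Rightarrow> 'a \<Rightarrow> 'a"
  where "entry_point c m = c + (1 / entry_scale c (m - c)) *\<^sub>R (m - c)"

lemma norm_entry_point:
  fixes c m :: "'a::real_normed_vector"
  assumes c: "1 < norm c" and m: "norm m \<le> 1"
  shows "norm (entry_point c m) = 1"
proof -
  let ?g = "entry_scale c (m - c)"
  have in_ball: "norm (c + (m - c)) \<le> 1"
    using m by simp
  have g: "1 \<le> ?g"
    using entry_scale_mem(1)[OF c in_ball] .
  then have "entry_point c m = (1 / ?g) *\<^sub>R (?g *\<^sub>R c + (m - c))"
    unfolding entry_point_def by (simp add: algebra_simps)
  then show ?thesis
    using norm_entry_scale[OF c in_ball] g by simp
qed

lemma entry_point_in_cball: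
  fixes c m :: "'a::real_normed_vector"
  assumes c: "1 < norm c" and m: "norm m \<le> 1" "m \<in> cball ((1 - e) *\<^sub>R c) e"
    and e: "0 < e" "e < 1"
  shows "entry_point c m \<in> cball ((1 - e) *\<^sub>R c) e"
proof -
  let ?d = "m - c"
  let ?g = "entry_scale c ?d"
  have in_ball: "norm (c + ?d) \<le> 1"
    using m by simp
  have g: "1 \<le> ?g" "norm (?g *\<^sub>R c + ?d) \<le> ?g"
    using entry_scale_mem[OF c in_ball] by auto
  have "norm (e *\<^sub>R c + ?d) \<le> e"
    using m(2) by (simp add: dist_norm norm_minus_commute algebra_simps)
  define l where "l = (e * ?g - e) / (?g - e)"
  have "0 < ?g - e"
    using g e by simp
  moreover have "e * ?g - e \<le> ?g - e"
    using g(1) e by (simp add: mult_left_le_one_le)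
  ultimately have l: "0 \<le> l" "l \<le> 1"
    using g(1) e by (simp_all add: l_def)
  have "l * (?g - e) = e * ?g - e"
    using \<open>0 < ?g - e\<close> by (simp add: l_def)
  then have l_comb: "(1 - l) * e + l * ?g = e * ?g"
    by (simp add: algebra_simps)
  have "norm ((e * ?g) *\<^sub>R c + ?d) \<le> e * ?g"
    using norm_scaleR_add_convex_combination[OF \<open>norm (e *\<^sub>R c + ?d) \<le> e\<close> g(2) l(1,2)]
    unfolding l_comb by simp
  moreover have "entry_point c m - (1 - e) *\<^sub>R c = (1 / ?g) *\<^sub>R ((e * ?g) *\<^sub>R c + ?d)"
    using g(1) unfolding entry_point_def by (simp add: algebra_simps)
  ultimately have "norm (entry_point c m - (1 - e) *\<^sub>R c) \<le> e"
    using g(1) by (simp add: pos_divide_le_eq)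
  then show ?thesis
    by (simp add: dist_norm norm_minus_commute)
qed

lemma continuous_on_entry_point_linepath:
  fixes c p q :: "'a::real_normed_vector"
  assumes c: "1 < norm c" and pq: "norm p \<le> 1" "norm q \<le> 1"
  shows "continuous_on {0..1} (\<lambda>s. entry_point c (linepath p q s))"
proof -
  have "entry_scale c (linepath p q s - c) \<noteq> 0" if "s \<in> {0..1}" for s
    using entry_scale_mem(1)[OF c, of "linepath p q s - c"] norm_linepath_le_1[OF pq that] by simp
  then show ?thesis
    unfolding entry_point_def
    by (intro continuous_intros continuous_on_entry_scale_linepath[OF assms]) auto
qed

lemma path_connected_cap_if_centre_outside_ball:
  fixes c :: "'a::real_normed_vector"
  assumes e: "0 < e" "e < 1" and c: "1 < norm c"
  shows "path_connected (cball ((1 - e) *\<^sub>R c) e \<inter> sphere 0 1)" (is "path_connected ?T")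
  unfolding path_connected_component
proof (intro ballI)
  have entry_point_in_cap: "entry_point c m \<in> ?T"
    if "norm m \<le> 1" "m \<in> cball ((1 - e) *\<^sub>R c) e" for m
    using norm_entry_point[OF c that(1)] entry_point_in_cball[OF c that e] by simp
  have to_entry_point: "path_component ?T x (entry_point c x)" if x: "x \<in> ?T" for x
  proof -
    have "1 \<le> entry_scale c (x - c)"
      using x entry_scale_mem(1)[OF c, of "x - c"] by simp
    moreover have "entry_point c x \<in> ?T"
      using x by (intro entry_point_in_cap) auto
    ultimately have "closed_segment x (entry_point c x) \<subseteq> ?T"
      unfolding entry_point_def using closed_segment_towards_centre_subset[OF e x] by simp
    then show ?thesis
      by (rule path_component_linepath)
  qed
  fix u v
  assume u: "u \<in> ?T" and v: "v \<in> ?T"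
  let ?\<gamma> = "\<lambda>s. entry_point c (linepath u v s)"
  have "closed_segment u v \<subseteq> cball ((1 - e) *\<^sub>R c) e"
    using u v by (intro closed_segment_subset convex_cball) auto
  then have "?\<gamma> s \<in> ?T" if "s \<in> {0..1}" for s
    using linepath_in_path[OF that, of u v] norm_linepath_le_1[of u v s] u v that
    by (intro entry_point_in_cap) auto
  then have "path_component ?T (?\<gamma> 0) (?\<gamma> 1)"
    unfolding path_component_def using continuous_on_entry_point_linepath[OF c, of u v] u v
    by (intro exI[of _ ?\<gamma>]) (auto simp: path_def path_image_def pathstart_def pathfinish_def)
  then have "path_component ?T (entry_point c u) (entry_point c v)"
    by (simp add: linepath_0' linepath_1')
  then show "path_component ?T u v"
    using path_component_trans path_component_sym to_entry_point[OF u] to_entry_point[OF v]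
    by metis
qed

lemma path_connected_cap:
  fixes c :: "'a::real_normed_vector"
  assumes "0 < e" "e < 1"
  shows "path_connected (cball ((1 - e) *\<^sub>R c) e \<inter> sphere 0 1)"
proof (cases "norm c \<le> 1")
  case True
  then show ?thesis
    by (rule path_connected_cap_if_centre_in_ball[OF assms])
next
  case False
  then show ?thesis
    by (intro path_connected_cap_if_centre_outside_ball[OF assms]) simp
qed

theorem lemma2p1:
  fixes z :: "'a :: banach" and \<epsilon> :: real
  assumes "dim (UNIV :: 'a set) = 2"
    and "z \<noteq> 0"
    and "0 \<le> \<epsilon>" and "\<epsilon> < 1"
  shows "cball z \<epsilon> \<inter> sphere 0 1 = {} \<or> path_connected (cball z \<epsilon> \<inter> sphere 0 1)"
proof (cases "\<epsilon> = 0")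
  case True
  then have "cball z \<epsilon> \<inter> sphere 0 1 \<subseteq> {z}"
    by auto
  then show ?thesis
    by (metis path_connected_singleton subset_singletonD)
next
  case False
  then have e: "0 < \<epsilon>" "\<epsilon> < 1"
    using assms(3,4) by auto
  have "z = (1 - \<epsilon>) *\<^sub>R ((1 / (1 - \<epsilon>)) *\<^sub>R z)"
    using e(2) by simp
  then show ?thesis
    using path_connected_cap[OF e, of "(1 / (1 - \<epsilon>)) *\<^sub>R z"] by metis
qed

end
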